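(* Let $r\ge 4$ and let $w:E(K_r)\to\mathbb{R}_{>0}$ be a positive edge-weighting of the complete graph $K_r$ on vertex set $U$. For each edge $e$ let $C_w(e)$ be the maximum of $w(C)=\sum_{f\in E(C)}w(f)$ over all cycles $C$ of $K_r$ containing $e$. Then $$\sum_{e\in E(K_r)}\frac{w(e)}{C_w(e)}=\frac{r-1}{2}$$ holds if and only if $w$ is vertex-induced, i.e. there exists $a:U\to\mathbb{R}_{\ge 0}$ with $w(uv)=\frac{a(u)+a(v)}{2}$ for all edges $uv$. In this case, $C_w(e)=\sum_{v\in U}a(v)$ for all $e\in E(K_r)$. *)

theory Defs
  imports Complex_Main
begin

definition K_edges :: "'a set \<Rightarrow> 'a set set" where
  "K_edges U = {e. e \<subseteq> U \<and> card e = 2}"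

definition is_cycle_list :: "'a set \<Rightarrow> 'a list \<Rightarrow> bool" where
  "is_cycle_list U vs \<longleftrightarrow> distinct vs \<and> 3 \<le> length vs \<and> set vs \<subseteq> U"

definition cycle_edges :: "'a list \<Rightarrow> 'a set set" where
  "cycle_edges vs = {{vs ! i, vs ! ((i + 1) mod length vs)} | i. i < length vs}"

definition Cw :: "'a set \<Rightarrow> ('a set \<Rightarrow> real) \<Rightarrow> 'a set \<Rightarrow> real" where
  "Cw U w e = Max {sum w (cycle_edges vs) | vs. is_cycle_list U vs \<and> e \<in> cycle_edges vs}"

definition vertex_induced_by :: "'a set \<Rightarrow> ('a set \<Rightarrow> real) \<Rightarrow> ('a \<Rightarrow> real) \<Rightarrow> bool" where
  "vertex_induced_by U w a \<longleftrightarrow> (\<forall>v\<in>U. 0 \<le> a v) \<and>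
     (\<forall>u\<in>U. \<forall>v\<in>U. u \<noteq> v \<longrightarrow> w {u, v} = (a u + a v) / 2)"

end

theory Submission
  imports Defs "HOL-Combinatorics.Multiset_Permutations"
begin

text \<open>
  Every ordering H of U is a Hamiltonian cycle, and since Cw e >= w(H) for each edge e of H,
  the sum of w e / Cw e over the edges of H is at most the sum of w e / w(H), which is 1.
  Averaging over all r! orderings, in which every edge occurs as a pair of cyclically consecutive
  vertices equally often (2 r (r-2)! times), gives that the sum of w e / Cw e over all edges
  is at most (r-1)/2, with equality iff every Hamiltonian cycle is a heaviest cycle through each
  of its edges. Then any two Hamiltonian cycles sharing an edge have equal weight; comparing two
  that differ by a 2-opt move yields the four-point condition w(ux) + w(vy) = w(uv) + w(xy), which
  forces w(uv) = (a(u) + a(v))/2 with a(u) = w(up) + w(uq) - w(pq). Comparing a Hamiltonian cycle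
  with a cycle that avoids u but shares an edge with it shows a(u) >= 0. Conversely, if w is
  vertex-induced, every cycle weighs the sum of a over its vertices, so the Hamiltonian cycles
  are the heaviest ones, of weight the sum of a over U.
\<close>

definition cycle_edge :: "'a list \<Rightarrow> nat \<Rightarrow> 'a set" where
  "cycle_edge vs i = {vs ! i, vs ! ((i + 1) mod length vs)}"

lemma cycle_edges_conv_image: "cycle_edges vs = cycle_edge vs ` {..<length vs}"
  unfolding cycle_edges_def cycle_edge_def by auto

lemma add_one_mod_less: "i < n \<Longrightarrow> (i + 1) mod n < (n::nat)"
  by (intro mod_less_divisor) linarith

lemma nth_neq_nth_add_one_mod:
  assumes "distinct vs" "2 \<le> length vs" "i < length vs"
  shows "vs ! i \<noteq> vs ! ((i + 1) mod length vs)"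
proof
  assume "vs ! i = vs ! ((i + 1) mod length vs)"
  moreover have "(i + 1) mod length vs < length vs"
    using assms(3) by (rule add_one_mod_less)
  ultimately have "i = (i + 1) mod length vs"
    using assms nth_eq_iff_index_eq by blast
  then show False
    using assms by (auto simp: mod_Suc split: if_splits)
qed

lemma inj_on_cycle_edge:
  assumes "distinct vs" "3 \<le> length vs"
  shows "inj_on (cycle_edge vs) {..<length vs}"
proof
  fix i j
  assume i: "i \<in> {..<length vs}" and j: "j \<in> {..<length vs}"
    and eq: "cycle_edge vs i = cycle_edge vs j"
  define n where "n = length vs"
  have idx: "k = l" if "vs ! k = vs ! l" "k < n" "l < n" for k l
    using that assms(1) by (simp add: nth_eq_iff_index_eq n_def)
  from eq consider "vs ! i = vs ! j"
    | "vs ! i = vs ! ((j + 1) mod n)" "vs ! ((i + 1) mod n) = vs ! j"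
    unfolding cycle_edge_def n_def by (auto simp: doubleton_eq_iff)
  then show "i = j"
  proof cases
    case 1
    then show ?thesis using idx i j by (simp add: n_def)
  next
    case 2
    then have "i = (j + 1) mod n" "j = (i + 1) mod n"
      using idx i j add_one_mod_less[of _ n] by (auto simp: n_def)
    then have "i = (i + 2) mod n"
      by (simp add: mod_Suc_eq)
    moreover have "i < n" "3 \<le> n"
      using i assms(2) by (auto simp: n_def)
    ultimately show ?thesis
      by (cases "i + 2 < n") (auto simp: le_mod_geq)
  qed
qed

lemma sum_cycle_edges:
  assumes "distinct vs" "3 \<le> length vs"
  shows "sum f (cycle_edges vs) = (\<Sum>i<length vs. f (cycle_edge vs i))"
  unfolding cycle_edges_conv_image by (rule sum.reindex[OF inj_on_cycle_edge[OF assms], unfolded comp_def])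

lemma sum_cycle_edges_conv_sum_list:
  assumes "distinct vs" "3 \<le> length vs"
  shows "sum f (cycle_edges vs) = (\<Sum>(x, y)\<leftarrow>zip vs (rotate1 vs). f {x, y})"
  by (simp add: sum_cycle_edges[OF assms] sum_list_sum_nth atLeast0LessThan nth_rotate1 cycle_edge_def)

lemma sum_nth_eq_sum_set:
  assumes "distinct vs"
  shows "(\<Sum>i<length vs. f (vs ! i)) = sum f (set vs)"
  using assms by (simp add: sum.distinct_set_conv_list sum_list_sum_nth atLeast0LessThan)

lemma finite_K_edges: "finite U \<Longrightarrow> finite (K_edges U)"
  unfolding K_edges_def by (rule finite_subset[of _ "Pow U"]) auto

lemma cycle_edges_subset_K_edges:
  assumes "is_cycle_list U vs"
  shows "cycle_edges vs \<subseteq> K_edges U"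
proof -
  have "vs ! i \<in> U" "vs ! ((i + 1) mod length vs) \<in> U" if "i < length vs" for i
  proof -
    have "(i + 1) mod length vs < length vs"
      using that by (rule add_one_mod_less)
    then show "vs ! i \<in> U" "vs ! ((i + 1) mod length vs) \<in> U"
      using assms that nth_mem by (auto simp: is_cycle_list_def)
  qed
  then show ?thesis
    using assms nth_neq_nth_add_one_mod[of vs]
    by (auto simp: cycle_edges_conv_image cycle_edge_def K_edges_def is_cycle_list_def)
qed

lemma sum_cycle_edges_pos:
  fixes w :: "'a set \<Rightarrow> real"
  assumes "finite U" "\<forall>e\<in>K_edges U. 0 < w e" "is_cycle_list U vs"
  shows "0 < sum w (cycle_edges vs)"
proof (rule sum_pos)
  show "finite (cycle_edges vs)"
    using cycle_edges_subset_K_edges[OF assms(3)] finite_K_edges[OF assms(1)] by (rule finite_subset)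
  show "cycle_edges vs \<noteq> {}"
    using assms(3) by (auto simp: cycle_edges_conv_image is_cycle_list_def lessThan_empty_iff)
qed (use assms cycle_edges_subset_K_edges in blast)

lemma last_hd_in_cycle_edges:
  assumes "vs \<noteq> []"
  shows "{last vs, hd vs} \<in> cycle_edges vs"
  unfolding cycle_edges_def using assms
  by (intro CollectI exI[of _ "length vs - 1"]) (simp add: last_conv_nth hd_conv_nth)

lemma Cons_Cons_in_cycle_edges: "{x, y} \<in> cycle_edges (x # y # vs)"
  unfolding cycle_edges_def by (intro CollectI exI[of _ 0]) simp

lemma finite_cycle_lists:
  assumes "finite U"
  shows "finite {vs. is_cycle_list U vs}"
proof (rule finite_subset[OF _ finite_lists_length_le[OF assms, of "card U"]])
  show "{vs. is_cycle_list U vs} \<subseteq> {vs. set vs \<subseteq> U \<and> length vs \<le> card U}"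
    using assms by (auto simp: is_cycle_list_def distinct_card[symmetric] intro: card_mono)
qed

lemma finite_cycle_weights_through:
  assumes "finite U"
  shows "finite {sum w (cycle_edges vs) | vs. is_cycle_list U vs \<and> e \<in> cycle_edges vs}"
proof (rule finite_subset)
  show "finite ((\<lambda>vs. sum w (cycle_edges vs)) ` {vs. is_cycle_list U vs})"
    using finite_cycle_lists[OF assms] by (rule finite_imageI)
qed auto

lemma cycle_weight_le_Cw:
  assumes "finite U" "is_cycle_list U vs" "e \<in> cycle_edges vs"
  shows "sum w (cycle_edges vs) \<le> Cw U w e"
  unfolding Cw_def using assms by (intro Max_ge[OF finite_cycle_weights_through]) auto

lemma Cw_eqI:
  assumes "finite U" "is_cycle_list U vs" "e \<in> cycle_edges vs" "sum w (cycle_edges vs) = M"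
    and "\<And>vs. is_cycle_list U vs \<Longrightarrow> e \<in> cycle_edges vs \<Longrightarrow> sum w (cycle_edges vs) \<le> M"
  shows "Cw U w e = M"
  unfolding Cw_def
proof (rule Max_eqI[OF finite_cycle_weights_through[OF assms(1)]])
  fix y
  assume "y \<in> {sum w (cycle_edges vs) | vs. is_cycle_list U vs \<and> e \<in> cycle_edges vs}"
  then show "y \<le> M"
    using assms(5) by auto
next
  show "M \<in> {sum w (cycle_edges vs) | vs. is_cycle_list U vs \<and> e \<in> cycle_edges vs}"
    using assms(2-4) by auto
qed

lemma permutations_of_set_is_cycle_list:
  assumes "finite U" "3 \<le> card U" "vs \<in> permutations_of_set U"
  shows "is_cycle_list U vs"
  using assms by (auto simp: is_cycle_list_def permutations_of_set_def distinct_card)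

lemma hamiltonian_cycle_through_edge:
  assumes "finite U" "e \<in> K_edges U"
  obtains vs where "vs \<in> permutations_of_set U" "e \<in> cycle_edges vs"
proof -
  obtain x y where e: "e = {x, y}" "x \<noteq> y" "x \<in> U" "y \<in> U"
    using assms(2) unfolding K_edges_def card_2_iff by auto
  obtain vs where "vs \<in> permutations_of_set (U - {x, y})"
    using assms(1) permutations_of_set_empty_iff[of "U - {x, y}"] by blast
  then have "x # y # vs \<in> permutations_of_set U"
    using e by (auto simp: permutations_of_set_def)
  then show ?thesis
    using that Cons_Cons_in_cycle_edges[of x y vs] unfolding e(1) by blast
qed

lemma sum_eq_sum_iff_of_le:
  fixes f g :: "'i \<Rightarrow> 'a::ordered_cancel_comm_monoid_add"
  assumes "finite A" "\<And>x. x \<in> A \<Longrightarrow> f x \<le> g x"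
  shows "sum f A = sum g A \<longleftrightarrow> (\<forall>x\<in>A. f x = g x)"
  using sum_mono_inv[of f A g] assms by (auto intro: sum.cong)

lemma
  fixes w :: "'a set \<Rightarrow> real"
  assumes U: "finite U" "\<forall>e\<in>K_edges U. 0 < w e" and vs: "is_cycle_list U vs"
  shows sum_cycle_edges_ratio_Cw_le: "(\<Sum>e\<in>cycle_edges vs. w e / Cw U w e) \<le> 1"
    and sum_cycle_edges_ratio_Cw_eq_1_iff: "(\<Sum>e\<in>cycle_edges vs. w e / Cw U w e) = 1 \<longleftrightarrow>
           (\<forall>e\<in>cycle_edges vs. Cw U w e = sum w (cycle_edges vs))"
proof -
  define W where "W = sum w (cycle_edges vs)"
  have W_pos: "0 < W"
    unfolding W_def using sum_cycle_edges_pos[OF U vs] .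
  have w_pos: "0 < w e" if "e \<in> cycle_edges vs" for e
    using that U(2) cycle_edges_subset_K_edges[OF vs] by blast
  have le: "w e / Cw U w e \<le> w e / W" if "e \<in> cycle_edges vs" for e
  proof (rule divide_left_mono)
    show "W \<le> Cw U w e"
      unfolding W_def using cycle_weight_le_Cw[OF U(1) vs that] .
    then show "0 < Cw U w e * W"
      using W_pos by simp
  qed (use w_pos[OF that] in simp)
  have fin: "finite (cycle_edges vs)"
    using finite_subset[OF cycle_edges_subset_K_edges[OF vs] finite_K_edges[OF U(1)]] .
  have one: "(\<Sum>e\<in>cycle_edges vs. w e / W) = 1"
    using W_pos by (simp add: W_def flip: sum_divide_distrib)
  show "(\<Sum>e\<in>cycle_edges vs. w e / Cw U w e) \<le> 1"
    unfolding one[symmetric] using le by (rule sum_mono)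
  have "(\<Sum>e\<in>cycle_edges vs. w e / Cw U w e) = 1 \<longleftrightarrow>
      (\<forall>e\<in>cycle_edges vs. w e / Cw U w e = w e / W)"
    unfolding one[symmetric] using fin le by (rule sum_eq_sum_iff_of_le)
  also have "\<dots> \<longleftrightarrow> (\<forall>e\<in>cycle_edges vs. Cw U w e = W)"
    using w_pos by (simp add: divide_cancel_left less_imp_neq[symmetric])
  finally show "(\<Sum>e\<in>cycle_edges vs. w e / Cw U w e) = 1 \<longleftrightarrow>
      (\<forall>e\<in>cycle_edges vs. Cw U w e = sum w (cycle_edges vs))"
    unfolding W_def .
qed

lemma sum_permutations_of_set_Cons:
  assumes "finite A" "A \<noteq> {}"
  shows "(\<Sum>xs\<in>permutations_of_set A. f xs) = (\<Sum>x\<in>A. \<Sum>xs\<in>permutations_of_set (A - {x}). f (x # xs))"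
proof -
  have "(\<Sum>xs\<in>permutations_of_set A. f xs)
      = (\<Sum>xs\<in>(\<Union>x\<in>A. (#) x ` permutations_of_set (A - {x})). f xs)"
    by (simp only: permutations_of_set_nonempty[OF assms(2)])
  also have "\<dots> = (\<Sum>x\<in>A. \<Sum>xs\<in>(#) x ` permutations_of_set (A - {x}). f xs)"
    by (rule sum.UNION_disjoint) (use assms(1) in auto)
  also have "\<dots> = (\<Sum>x\<in>A. \<Sum>xs\<in>permutations_of_set (A - {x}). f (x # xs))"
    by (simp add: sum.reindex)
  finally show ?thesis .
qed

lemma bij_betw_rotate1_permutations_of_set:
  "bij_betw rotate1 (permutations_of_set A) (permutations_of_set A)"
proof (rule bij_betw_imageI)
  show "inj_on rotate1 (permutations_of_set A)"
    using inj_rotate1 by (rule inj_on_subset) simp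
  show "rotate1 ` permutations_of_set A = permutations_of_set A"
  proof
    show "permutations_of_set A \<subseteq> rotate1 ` permutations_of_set A"
    proof
      fix xs assume xs: "xs \<in> permutations_of_set A"
      obtain ys where "xs = rotate1 ys"
        using surj_rotate1 by (metis surjD)
      with xs show "xs \<in> rotate1 ` permutations_of_set A"
        by (auto simp: permutations_of_set_def)
    qed
  qed (auto simp: permutations_of_set_def)
qed

lemma sum_permutations_of_set_rotate:
  "(\<Sum>xs\<in>permutations_of_set A. f (rotate n xs)) = (\<Sum>xs\<in>permutations_of_set A. f xs)"
proof (induction n arbitrary: f)
  case (Suc n)
  have "(\<Sum>xs\<in>permutations_of_set A. f (rotate (Suc n) xs))
      = (\<Sum>xs\<in>permutations_of_set A. f (rotate1 (rotate n xs)))"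
    by simp
  also have "\<dots> = (\<Sum>xs\<in>permutations_of_set A. f (rotate1 xs))"
    by (rule Suc.IH)
  also have "\<dots> = (\<Sum>xs\<in>permutations_of_set A. f xs)"
    using sum.reindex_bij_betw[OF bij_betw_rotate1_permutations_of_set] .
  finally show ?case .
qed simp

lemma sum_permutations_of_set_first_two:
  fixes g :: "'a \<Rightarrow> 'a \<Rightarrow> real"
  assumes "finite U" "2 \<le> card U"
  shows "(\<Sum>vs\<in>permutations_of_set U. g (vs ! 0) (vs ! 1))
       = fact (card U - 2) * (\<Sum>x\<in>U. \<Sum>y\<in>U - {x}. g x y)"
proof -
  have nonempty: "A - {x} \<noteq> {}" if "x \<in> A" "A \<subseteq> U" "2 \<le> card A" for x A
  proof
    assume "A - {x} = {}"
    then have "card A \<le> card {x}"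
      using that(2) assms(1) by (intro card_mono) (auto intro: finite_subset)
    then show False
      using that(3) by simp
  qed
  have "(\<Sum>vs\<in>permutations_of_set U. g (vs ! 0) (vs ! 1))
      = (\<Sum>x\<in>U. \<Sum>xs\<in>permutations_of_set (U - {x}). g x (xs ! 0))"
    using assms by (subst sum_permutations_of_set_Cons) auto
  also have "\<dots> = (\<Sum>x\<in>U. \<Sum>y\<in>U - {x}. \<Sum>vs\<in>permutations_of_set (U - {x} - {y}). g x y)"
  proof (intro sum.cong refl)
    fix x assume "x \<in> U"
    then show "(\<Sum>xs\<in>permutations_of_set (U - {x}). g x (xs ! 0))
        = (\<Sum>y\<in>U - {x}. \<Sum>vs\<in>permutations_of_set (U - {x} - {y}). g x y)"
      using assms nonempty[of x U] by (subst sum_permutations_of_set_Cons) auto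
  qed
  also have "\<dots> = (\<Sum>x\<in>U. \<Sum>y\<in>U - {x}. fact (card U - 2) * g x y)"
    using assms(1) by (intro sum.cong refl) (simp add: card_Diff_singleton_if numeral_2_eq_2)
  finally show ?thesis
    by (simp add: sum_distrib_left)
qed

lemma sum_ordered_pairs_eq_twice_sum_K_edges:
  fixes f :: "'a set \<Rightarrow> real"
  assumes "finite U"
  shows "(\<Sum>x\<in>U. \<Sum>y\<in>U - {x}. f {x, y}) = 2 * (\<Sum>e\<in>K_edges U. f e)"
proof -
  have bij: "bij_betw (\<lambda>y. {x, y}) (U - {x}) {e \<in> K_edges U. x \<in> e}" if "x \<in> U" for x
  proof (rule bij_betw_imageI)
    show "inj_on (\<lambda>y. {x, y}) (U - {x})"
      by (auto simp: inj_on_def doubleton_eq_iff)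
    show "(\<lambda>y. {x, y}) ` (U - {x}) = {e \<in> K_edges U. x \<in> e}"
    proof (intro equalityI subsetI)
      fix e assume "e \<in> {e \<in> K_edges U. x \<in> e}"
      then obtain y where "e = {x, y}" "x \<noteq> y" "y \<in> U"
        unfolding K_edges_def card_2_iff by auto
      then show "e \<in> (\<lambda>y. {x, y}) ` (U - {x})"
        by blast
    qed (use that in \<open>auto simp: K_edges_def\<close>)
  qed
  have "(\<Sum>x\<in>U. \<Sum>y\<in>U - {x}. f {x, y}) = (\<Sum>x\<in>U. \<Sum>e\<in>{e \<in> K_edges U. x \<in> e}. f e)"
    using bij by (intro sum.cong refl sum.reindex_bij_betw)
  also have "\<dots> = (\<Sum>e\<in>K_edges U. \<Sum>x\<in>{x \<in> U. x \<in> e}. f e)"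
    using assms finite_K_edges[OF assms] by (rule sum.swap_restrict)
  also have "\<dots> = (\<Sum>e\<in>K_edges U. 2 * f e)"
  proof (rule sum.cong)
    fix e assume "e \<in> K_edges U"
    then have "{x \<in> U. x \<in> e} = e" "card e = 2"
      by (auto simp: K_edges_def)
    then show "(\<Sum>x\<in>{x \<in> U. x \<in> e}. f e) = 2 * f e"
      by simp
  qed simp
  finally show ?thesis
    by (simp add: sum_distrib_left)
qed

lemma sum_permutations_sum_cycle_edges:
  fixes f :: "'a set \<Rightarrow> real"
  assumes U: "finite U" "card U = r" "3 \<le> r"
  shows "(\<Sum>vs\<in>permutations_of_set U. \<Sum>e\<in>cycle_edges vs. f e)
       = 2 * r * fact (r - 2) * (\<Sum>e\<in>K_edges U. f e)"
proof -
  let ?P = "permutations_of_set U"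
  have len: "length vs = r" if "vs \<in> ?P" for vs
    using that U(2) by (simp add: length_finite_permutations_of_set)
  have "(\<Sum>vs\<in>?P. \<Sum>e\<in>cycle_edges vs. f e) = (\<Sum>vs\<in>?P. \<Sum>i<r. f {vs ! i, vs ! ((i + 1) mod r)})"
    using len U(3) by (intro sum.cong refl)
      (simp add: sum_cycle_edges permutations_of_setD cycle_edge_def)
  also have "\<dots> = (\<Sum>i<r. \<Sum>vs\<in>?P. f {rotate i vs ! 0, rotate i vs ! 1})"
    using len U(3) by (subst sum.swap) (intro sum.cong refl; simp add: nth_rotate)
  also have "\<dots> = (\<Sum>i<r. \<Sum>vs\<in>?P. f {vs ! 0, vs ! 1})"
    by (simp only: sum_permutations_of_set_rotate[of "\<lambda>vs. f {vs ! 0, vs ! 1}"])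
  also have "\<dots> = real r * (fact (r - 2) * (\<Sum>x\<in>U. \<Sum>y\<in>U - {x}. f {x, y}))"
    using U sum_permutations_of_set_first_two[of U "\<lambda>x y. f {x, y}"] by simp
  also have "\<dots> = 2 * real r * fact (r - 2) * (\<Sum>e\<in>K_edges U. f e)"
    using U(1) by (simp add: sum_ordered_pairs_eq_twice_sum_K_edges)
  finally show ?thesis .
qed

definition hamiltonian_cycles_heaviest :: "'a set \<Rightarrow> ('a set \<Rightarrow> real) \<Rightarrow> bool" where
  "hamiltonian_cycles_heaviest U w \<longleftrightarrow>
     (\<forall>vs\<in>permutations_of_set U. \<forall>e\<in>cycle_edges vs. Cw U w e = sum w (cycle_edges vs))"

lemma sum_ratio_Cw_eq_iff_hamiltonian_cycles_heaviest:
  fixes w :: "'a set \<Rightarrow> real"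
  assumes U: "finite U" "card U = r" "3 \<le> r" "\<forall>e\<in>K_edges U. 0 < w e"
  shows "(\<Sum>e\<in>K_edges U. w e / Cw U w e) = (real r - 1) / 2 \<longleftrightarrow> hamiltonian_cycles_heaviest U w"
proof -
  let ?P = "permutations_of_set U"
  define T where "T vs = (\<Sum>e\<in>cycle_edges vs. w e / Cw U w e)" for vs
  define c :: real where "c = 2 * real r * fact (r - 2)"
  have cycle: "is_cycle_list U vs" if "vs \<in> ?P" for vs
    using permutations_of_set_is_cycle_list U that by auto
  have "fact r = real r * (real r - 1) * fact (r - 2)"
  proof -
    have "r = Suc (Suc (r - 2))"
      using U(3) by simp
    then obtain m where "r = Suc (Suc m)"
      by blast
    then show ?thesis
      by (simp add: algebra_simps)
  qed
  then have sum_one: "(\<Sum>vs\<in>?P. 1) = c * ((real r - 1) / 2)"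
    using U(1,2) by (simp add: c_def)
  have sum_T: "(\<Sum>vs\<in>?P. T vs) = c * (\<Sum>e\<in>K_edges U. w e / Cw U w e)"
    unfolding T_def c_def using U(1-3) by (rule sum_permutations_sum_cycle_edges)
  have "0 < c"
    using U(3) by (simp add: c_def)
  then have "(\<Sum>e\<in>K_edges U. w e / Cw U w e) = (real r - 1) / 2
      \<longleftrightarrow> (\<Sum>vs\<in>?P. T vs) = (\<Sum>vs\<in>?P. 1)"
    unfolding sum_T sum_one by simp
  also have "\<dots> \<longleftrightarrow> (\<forall>vs\<in>?P. T vs = 1)"
    unfolding T_def using sum_cycle_edges_ratio_Cw_le[OF U(1,4) cycle]
    by (intro sum_eq_sum_iff_of_le) auto
  also have "\<dots> \<longleftrightarrow> hamiltonian_cycles_heaviest U w"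
    unfolding T_def hamiltonian_cycles_heaviest_def
    using sum_cycle_edges_ratio_Cw_eq_1_iff[OF U(1,4) cycle] by auto
  finally show ?thesis .
qed

lemma sum_cycle_edges_vertex_induced:
  fixes w :: "'a set \<Rightarrow> real"
  assumes a: "\<forall>u\<in>U. \<forall>v\<in>U. u \<noteq> v \<longrightarrow> w {u, v} = (a u + a v) / 2"
    and vs: "is_cycle_list U vs"
  shows "sum w (cycle_edges vs) = sum a (set vs)"
proof -
  have d: "distinct vs" "3 \<le> length vs" "set vs \<subseteq> U"
    using vs by (auto simp: is_cycle_list_def)
  have edge: "w (cycle_edge vs i) = (a (vs ! i) + a (rotate1 vs ! i)) / 2" if "i < length vs" for i
  proof -
    have "(i + 1) mod length vs < length vs"
      using that by (rule add_one_mod_less)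
    then have "vs ! i \<in> U" "vs ! ((i + 1) mod length vs) \<in> U"
      using d(3) that nth_mem by auto
    then show ?thesis
      using a[rule_format, of "vs ! i" "vs ! ((i + 1) mod length vs)"] nth_neq_nth_add_one_mod[of vs i] d that
      by (simp add: cycle_edge_def nth_rotate1)
  qed
  have "sum w (cycle_edges vs) = (\<Sum>i<length vs. (a (vs ! i) + a (rotate1 vs ! i)) / 2)"
    unfolding sum_cycle_edges[OF d(1,2)] using edge by (intro sum.cong) auto
  also have "\<dots> = ((\<Sum>i<length vs. a (vs ! i)) + (\<Sum>i<length vs. a (rotate1 vs ! i))) / 2"
    by (simp only: sum.distrib flip: sum_divide_distrib)
  also have "\<dots> = sum a (set vs)"
    using d by (simp add: sum_nth_eq_sum_set[of vs] sum_nth_eq_sum_set[of "rotate1 vs", simplified])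
  finally show ?thesis .
qed

lemma Cw_vertex_induced:
  assumes U: "finite U" "3 \<le> card U" and vi: "vertex_induced_by U w a" and e: "e \<in> K_edges U"
  shows "Cw U w e = sum a U"
proof -
  have a: "\<forall>u\<in>U. \<forall>v\<in>U. u \<noteq> v \<longrightarrow> w {u, v} = (a u + a v) / 2" and nonneg: "\<forall>v\<in>U. 0 \<le> a v"
    using vi by (auto simp: vertex_induced_by_def)
  obtain vs where vs: "vs \<in> permutations_of_set U" "e \<in> cycle_edges vs"
    using hamiltonian_cycle_through_edge[OF U(1) e] .
  show ?thesis
  proof (rule Cw_eqI[OF U(1) _ vs(2)])
    show "is_cycle_list U vs"
      using permutations_of_set_is_cycle_list[OF U vs(1)] .
    then show "sum w (cycle_edges vs) = sum a U"
      using sum_cycle_edges_vertex_induced[OF a] vs(1) by (simp add: permutations_of_setD)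
  next
    fix vs' assume vs': "is_cycle_list U vs'"
    then have "sum w (cycle_edges vs') = sum a (set vs')"
      by (rule sum_cycle_edges_vertex_induced[OF a])
    also have "\<dots> \<le> sum a U"
      using vs' U(1) nonneg by (intro sum_mono2) (auto simp: is_cycle_list_def)
    finally show "sum w (cycle_edges vs') \<le> sum a U" .
  qed
qed

lemma hamiltonian_cycles_heaviest_if_vertex_induced:
  assumes "finite U" "3 \<le> card U" "vertex_induced_by U w a"
  shows "hamiltonian_cycles_heaviest U w"
  unfolding hamiltonian_cycles_heaviest_def
proof (intro ballI)
  fix vs e assume vs: "vs \<in> permutations_of_set U" and e: "e \<in> cycle_edges vs"
  have cycle: "is_cycle_list U vs"
    using permutations_of_set_is_cycle_list[OF assms(1,2) vs] .
  have "Cw U w e = sum a U"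
    using Cw_vertex_induced[OF assms] cycle_edges_subset_K_edges[OF cycle] e by blast
  also have "\<dots> = sum w (cycle_edges vs)"
  proof -
    have "\<forall>u\<in>U. \<forall>v\<in>U. u \<noteq> v \<longrightarrow> w {u, v} = (a u + a v) / 2"
      using assms(3) by (simp add: vertex_induced_by_def)
    then have "sum w (cycle_edges vs) = sum a (set vs)"
      using cycle by (rule sum_cycle_edges_vertex_induced)
    then show ?thesis
      using vs by (simp add: permutations_of_setD)
  qed
  finally show "Cw U w e = sum w (cycle_edges vs)" .
qed

lemma four_point_of_hamiltonian_cycles_heaviest:
  assumes "finite U" "hamiltonian_cycles_heaviest U w"
    and "{u, x, v, y} \<subseteq> U" "distinct [u, x, v, y]"
  shows "w {u, x} + w {v, y} = w {u, v} + w {x, y}"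
proof -
  obtain Q where Q: "Q \<in> permutations_of_set (U - {u, x, v, y})"
    using assms(1) permutations_of_set_empty_iff[of "U - {u, x, v, y}"] by blast
  \<comment> \<open>a 2-opt move: both cycles close with the edge from the last vertex of Q back to u\<close>
  define vs1 where "vs1 = u # x # v # y # Q"
  define vs2 where "vs2 = u # v # x # y # Q"
  have perm: "vs1 \<in> permutations_of_set U" "vs2 \<in> permutations_of_set U"
    using Q assms(3,4) by (auto simp: vs1_def vs2_def permutations_of_set_def)
  have common: "{last vs1, hd vs1} \<in> cycle_edges vs1" "{last vs1, hd vs1} \<in> cycle_edges vs2"
    using last_hd_in_cycle_edges[of vs1] last_hd_in_cycle_edges[of vs2]
    by (simp_all add: vs1_def vs2_def)
  have "sum w (cycle_edges vs1) = sum w (cycle_edges vs2)"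
    using assms(2) perm common unfolding hamiltonian_cycles_heaviest_def by metis
  moreover have "distinct vs1" "distinct vs2" "3 \<le> length vs1" "3 \<le> length vs2"
    using perm by (auto simp: vs1_def vs2_def permutations_of_set_def)
  ultimately show ?thesis
    by (simp add: sum_cycle_edges_conv_sum_list vs1_def vs2_def insert_commute)
qed

lemma obtain_two_others:
  assumes "3 \<le> card U" "u \<in> U"
  obtains p q where "p \<in> U" "q \<in> U" "distinct [u, p, q]"
proof -
  have "2 \<le> card (U - {u})"
    using assms by (simp add: card_Diff_singleton_if)
  then obtain T where "T \<subseteq> U - {u}" "card T = 2"
    by (meson obtain_subset_with_card_n)
  then show ?thesis
    using that unfolding card_2_iff by auto
qed

lemma vertex_induced_weights_of_four_point:
  fixes w :: "'a set \<Rightarrow> real"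
  assumes U: "3 \<le> card U"
    and four_point: "\<And>u x v y. {u, x, v, y} \<subseteq> U \<Longrightarrow> distinct [u, x, v, y] \<Longrightarrow>
      w {u, x} + w {v, y} = w {u, v} + w {x, y}"
  shows "\<exists>a. \<forall>u\<in>U. \<forall>v\<in>U. u \<noteq> v \<longrightarrow> w {u, v} = (a u + a v) / 2"
proof -
  \<comment> \<open>for vertex-induced w this is 2 a(u), whatever the other two vertices p and q are\<close>
  define \<phi> where "\<phi> u p q = w {u, p} + w {u, q} - w {p, q}" for u p q
  have \<phi>_sym: "\<phi> u p q = \<phi> u q p" for u p q
    unfolding \<phi>_def by (simp add: insert_commute)
  have \<phi>_step: "\<phi> u p q = \<phi> u p q'"
    if "{u, p, q, q'} \<subseteq> U" "distinct [u, p, q]" "q' \<noteq> u" "q' \<noteq> p" for u p q q'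
  proof (cases "q = q'")
    case False
    then have "w {u, q} + w {q', p} = w {u, q'} + w {q, p}"
      using four_point[of u q q' p] that by auto
    then show ?thesis
      unfolding \<phi>_def by (simp add: insert_commute)
  qed simp
  have \<phi>_indep: "\<phi> u p q = \<phi> u p' q'"
    if "{u, p, q, p', q'} \<subseteq> U" "distinct [u, p, q]" "distinct [u, p', q']" for u p q p' q'
  proof -
    consider "p' = p" | "p' \<noteq> p" "p' = q" | "p' \<noteq> p" "p' \<noteq> q"
      by blast
    then show ?thesis
    proof cases
      case 1
      then show ?thesis using \<phi>_step[of u p q q'] that by auto
    next
      case 2
      then show ?thesis using \<phi>_sym[of u p q] \<phi>_step[of u q p q'] that by auto
    next
      case 3
      then show ?thesis
        using \<phi>_step[of u p q p'] \<phi>_sym[of u p p'] \<phi>_step[of u p' p q'] that by auto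
    qed
  qed
  have "\<forall>u\<in>U. \<exists>p q. p \<in> U \<and> q \<in> U \<and> distinct [u, p, q]"
    using obtain_two_others[OF U] by metis
  then obtain p q where pq: "\<And>u. u \<in> U \<Longrightarrow> p u \<in> U \<and> q u \<in> U \<and> distinct [u, p u, q u]"
    by metis
  define a where "a u = \<phi> u (p u) (q u)" for u
  have a: "a u = \<phi> u p' q'" if "{u, p', q'} \<subseteq> U" "distinct [u, p', q']" for u p' q'
    unfolding a_def using \<phi>_indep[of u "p u" "q u" p' q'] pq[of u] that by auto
  show ?thesis
  proof (intro exI ballI impI)
    fix u v assume uv: "u \<in> U" "v \<in> U" "u \<noteq> v"
    obtain z where z: "z \<in> U" "z \<noteq> u" "z \<noteq> v"
      using obtain_two_others[OF U uv(1)] by (metis distinct_length_2_or_more)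
    have "a u = \<phi> u v z" "a v = \<phi> v u z"
      using a[of u v z] a[of v u z] uv z by auto
    then show "w {u, v} = (a u + a v) / 2"
      unfolding \<phi>_def by (simp add: insert_commute)
  qed
qed

lemma nonneg_if_hamiltonian_cycles_heaviest:
  fixes w :: "'a set \<Rightarrow> real"
  assumes U: "finite U" "4 \<le> card U" and heaviest: "hamiltonian_cycles_heaviest U w"
    and a: "\<forall>u\<in>U. \<forall>v\<in>U. u \<noteq> v \<longrightarrow> w {u, v} = (a u + a v) / 2" and u: "u \<in> U"
  shows "0 \<le> a u"
proof -
  obtain Q where Q: "Q \<in> permutations_of_set (U - {u})"
    using U(1) permutations_of_set_empty_iff[of "U - {u}"] by blast
  have "length Q = card U - 1"
    using Q U(1) u by (simp add: length_finite_permutations_of_set)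
  then have cycle_Q: "is_cycle_list U Q"
    using Q U(2) by (auto simp: is_cycle_list_def permutations_of_set_def)
  define e where "e = {last Q, hd Q}"
  have e_Q: "e \<in> cycle_edges Q"
    unfolding e_def using cycle_Q by (intro last_hd_in_cycle_edges) (auto simp: is_cycle_list_def)
  obtain H where H: "H \<in> permutations_of_set U" "e \<in> cycle_edges H"
    using hamiltonian_cycle_through_edge[OF U(1)] cycle_edges_subset_K_edges[OF cycle_Q] e_Q by blast
  have cycle_H: "is_cycle_list U H"
    using permutations_of_set_is_cycle_list[OF U(1) _ H(1)] U(2) by simp
  have "sum a (U - {u}) = sum w (cycle_edges Q)"
    using sum_cycle_edges_vertex_induced[OF a cycle_Q] Q by (simp add: permutations_of_setD)
  also have "\<dots> \<le> Cw U w e"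
    using cycle_weight_le_Cw[OF U(1) cycle_Q e_Q] .
  also have "\<dots> = sum w (cycle_edges H)"
    using heaviest H unfolding hamiltonian_cycles_heaviest_def by blast
  also have "\<dots> = sum a U"
    using sum_cycle_edges_vertex_induced[OF a cycle_H] H(1) by (simp add: permutations_of_setD)
  finally show ?thesis
    using U(1) u by (simp add: sum.remove)
qed

lemma vertex_induced_if_hamiltonian_cycles_heaviest:
  assumes U: "finite U" "4 \<le> card U" and heaviest: "hamiltonian_cycles_heaviest U w"
  shows "\<exists>a. vertex_induced_by U w a"
proof -
  obtain a where a: "\<forall>u\<in>U. \<forall>v\<in>U. u \<noteq> v \<longrightarrow> w {u, v} = (a u + a v) / 2"
    using vertex_induced_weights_of_four_point[of U w]
      four_point_of_hamiltonian_cycles_heaviest[OF U(1) heaviest] U(2) by force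
  then have "vertex_induced_by U w a"
    using nonneg_if_hamiltonian_cycles_heaviest[OF U heaviest a] by (simp add: vertex_induced_by_def)
  then show ?thesis
    by blast
qed

theorem proposition3p9:
  fixes U :: "'a set" and w :: "'a set \<Rightarrow> real" and r :: nat
  assumes "finite U" and "card U = r" and "4 \<le> r"
    and "\<forall>e\<in>K_edges U. 0 < w e"
  shows "((\<Sum>e\<in>K_edges U. w e / Cw U w e) = (real r - 1) / 2
            \<longleftrightarrow> (\<exists>a. vertex_induced_by U w a))
         \<and> (\<forall>a. vertex_induced_by U w a \<longrightarrow> (\<forall>e\<in>K_edges U. Cw U w e = (\<Sum>v\<in>U. a v)))"
proof -
  have card: "3 \<le> card U" "4 \<le> card U"
    using assms(2,3) by simp_all
  have "(\<Sum>e\<in>K_edges U. w e / Cw U w e) = (real r - 1) / 2 \<longleftrightarrow> hamiltonian_cycles_heaviest U w"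
    using assms by (intro sum_ratio_Cw_eq_iff_hamiltonian_cycles_heaviest) simp_all
  also have "\<dots> \<longleftrightarrow> (\<exists>a. vertex_induced_by U w a)"
    using vertex_induced_if_hamiltonian_cycles_heaviest[OF assms(1) card(2)]
      hamiltonian_cycles_heaviest_if_vertex_induced[OF assms(1) card(1)] by blast
  finally show ?thesis
    using Cw_vertex_induced[OF assms(1) card(1)] by blast
qed

end
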